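(* Let $\varphi:\Lambda\to\Gamma$ be a regular covering map of finite simplicial graphs, let $v$ be a vertex of $\Gamma$, $[v]_\varphi$ its $\varphi$-equivalence class, and $\gamma_v$ any permutation of $[v]_\varphi$. Then the map $\gamma$ of $V\Gamma$ defined by $\gamma(w)=\gamma_v(w)$ for $w\in[v]_\varphi$ and $\gamma(w)=w$ otherwise is a graph symmetry of $\Gamma$ which is liftable.
   Context: Graphs are finite simplicial graphs; $\mathrm{lk}(x)$ is the subgraph induced by neighbours of $x$, $\mathrm{st}(x)$ induced by $\mathrm{lk}(x)\cup\{x\}$. $A_\Gamma$ is the right-angled Artin group with generators $V\Gamma$ and relations $[a,b]=1$ for edges; a graph symmetry is regarded as an automorphism of $A_\Gamma$ permuting generators. A covering map $\varphi:\Lambda\to\Gamma$ is a surjective simplicial map mapping the neighbours of each vertex $u$ bijectively onto the neighbours of $\varphi(u)$; regular means the group of graph automorphisms $\mu$ of $\Lambda$ with $\varphi\mu=\varphi$ acts transitively on each fiber. $\phi:A_\Lambda\to A_\Gamma$ is induced by $\varphi$; $f\in\mathrm{Aut}(A_\Gamma)$ is liftable if there is $F\in\mathrm{Aut}(A_\Lambda)$ with $f\circ\phi=\phi\circ F$. For vertices $x,y$ of $\Gamma$, $x\lesssim_\varphi y$ means: for every $u\in\varphi^{-1}(x)$ there is $u'\in\varphi^{-1}(y)$ with $\mathrm{lk}(u)\subseteq\mathrm{st}(u')$; $x,y$ are $\varphi$-equivalent if $x\lesssim_\varphi y$ and $y\lesssim_\varphi x$, and $[v]_\varphi$ is the set of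 vertices $\varphi$-equivalent to $v$. *)

theory Defs
  imports "HOL-Algebra.Group"
begin

definition simple_graph :: "'a set \<Rightarrow> ('a \<Rightarrow> 'a \<Rightarrow> bool) \<Rightarrow> bool" where
  "simple_graph V E \<longleftrightarrow> finite V \<and> (\<forall>x y. E x y \<longrightarrow> x \<in> V \<and> y \<in> V \<and> x \<noteq> y \<and> E y x)"

definition nbrs :: "'a set \<Rightarrow> ('a \<Rightarrow> 'a \<Rightarrow> bool) \<Rightarrow> 'a \<Rightarrow> 'a set" where
  "nbrs V E x = {y \<in> V. E x y}"

text \<open>vertex set of lk(x) and st(x) (these are induced subgraphs, so determined by vertices)\<close>
definition lk :: "'a set \<Rightarrow> ('a \<Rightarrow> 'a \<Rightarrow> bool) \<Rightarrow> 'a \<Rightarrow> 'a set" where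
  "lk V E x = nbrs V E x"

definition st :: "'a set \<Rightarrow> ('a \<Rightarrow> 'a \<Rightarrow> bool) \<Rightarrow> 'a \<Rightarrow> 'a set" where
  "st V E x = insert x (nbrs V E x)"

definition graph_aut :: "'a set \<Rightarrow> ('a \<Rightarrow> 'a \<Rightarrow> bool) \<Rightarrow> ('a \<Rightarrow> 'a) \<Rightarrow> bool" where
  "graph_aut V E g \<longleftrightarrow> bij_betw g V V \<and> (\<forall>x\<in>V. \<forall>y\<in>V. E x y \<longleftrightarrow> E (g x) (g y))"

definition covering_map ::
  "'a set \<Rightarrow> ('a \<Rightarrow> 'a \<Rightarrow> bool) \<Rightarrow> 'b set \<Rightarrow> ('b \<Rightarrow> 'b \<Rightarrow> bool) \<Rightarrow> ('a \<Rightarrow> 'b) \<Rightarrow> bool" where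
  "covering_map VL EL VG EG p \<longleftrightarrow>
     p ` VL = VG \<and>
     (\<forall>x y. EL x y \<longrightarrow> EG (p x) (p y)) \<and>
     (\<forall>u\<in>VL. bij_betw p (nbrs VL EL u) (nbrs VG EG (p u)))"

definition deck_group ::
  "'a set \<Rightarrow> ('a \<Rightarrow> 'a \<Rightarrow> bool) \<Rightarrow> ('a \<Rightarrow> 'b) \<Rightarrow> ('a \<Rightarrow> 'a) set" where
  "deck_group VL EL p = {\<mu>. graph_aut VL EL \<mu> \<and> (\<forall>u\<in>VL. p (\<mu> u) = p u)}"

definition regular_covering ::
  "'a set \<Rightarrow> ('a \<Rightarrow> 'a \<Rightarrow> bool) \<Rightarrow> 'b set \<Rightarrow> ('b \<Rightarrow> 'b \<Rightarrow> bool) \<Rightarrow> ('a \<Rightarrow> 'b) \<Rightarrow> bool" where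
  "regular_covering VL EL VG EG p \<longleftrightarrow>
     covering_map VL EL VG EG p \<and>
     (\<forall>u\<in>VL. \<forall>u'\<in>VL. p u = p u' \<longrightarrow> (\<exists>\<mu>\<in>deck_group VL EL p. \<mu> u = u'))"

definition phi_le ::
  "'a set \<Rightarrow> ('a \<Rightarrow> 'a \<Rightarrow> bool) \<Rightarrow> ('a \<Rightarrow> 'b) \<Rightarrow> 'b \<Rightarrow> 'b \<Rightarrow> bool" where
  "phi_le VL EL p x y \<longleftrightarrow>
     (\<forall>u\<in>VL. p u = x \<longrightarrow> (\<exists>u'\<in>VL. p u' = y \<and> lk VL EL u \<subseteq> st VL EL u'))"

definition phi_equiv ::
  "'a set \<Rightarrow> ('a \<Rightarrow> 'a \<Rightarrow> bool) \<Rightarrow> ('a \<Rightarrow> 'b) \<Rightarrow> 'b \<Rightarrow> 'b \<Rightarrow> bool" where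
  "phi_equiv VL EL p x y \<longleftrightarrow> phi_le VL EL p x y \<and> phi_le VL EL p y x"

definition phi_class ::
  "'a set \<Rightarrow> ('a \<Rightarrow> 'a \<Rightarrow> bool) \<Rightarrow> 'b set \<Rightarrow> ('a \<Rightarrow> 'b) \<Rightarrow> 'b \<Rightarrow> 'b set" where
  "phi_class VL EL VG p v = {w \<in> VG. phi_equiv VL EL p v w}"

text \<open>Words: lists of letters (a, e) where e = True means a and e = False means a inverse.\<close>

type_synonym 'a word = "('a \<times> bool) list"

inductive raag_step :: "('a \<Rightarrow> 'a \<Rightarrow> bool) \<Rightarrow> 'a word \<Rightarrow> 'a word \<Rightarrow> bool" for E where
  cancel: "raag_step E (xs @ [(a, b), (a, \<not> b)] @ ys) (xs @ ys)"
| commute: "E a c \<Longrightarrow> raag_step E (xs @ [(a, b), (c, d)] @ ys) (xs @ [(c, d), (a, b)] @ ys)"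

definition raag_eq :: "('a \<Rightarrow> 'a \<Rightarrow> bool) \<Rightarrow> 'a word \<Rightarrow> 'a word \<Rightarrow> bool" where
  "raag_eq E = equivclp (raag_step E)"

definition raag_words :: "'a set \<Rightarrow> 'a word set" where
  "raag_words V = lists (V \<times> UNIV)"

definition raag_cls :: "'a set \<Rightarrow> ('a \<Rightarrow> 'a \<Rightarrow> bool) \<Rightarrow> 'a word \<Rightarrow> 'a word set" where
  "raag_cls V E w = {w' \<in> raag_words V. raag_eq E w w'}"

definition RAAG :: "'a set \<Rightarrow> ('a \<Rightarrow> 'a \<Rightarrow> bool) \<Rightarrow> 'a word set monoid" where
  "RAAG V E = \<lparr> carrier = raag_cls V E ` raag_words V,
                 mult = (\<lambda>X Y. raag_cls V E ((SOME x. x \<in> X) @ (SOME y. y \<in> Y))),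
                 one = raag_cls V E [] \<rparr>"

definition raag_map ::
  "'a set \<Rightarrow> 'b set \<Rightarrow> ('b \<Rightarrow> 'b \<Rightarrow> bool) \<Rightarrow> ('a \<Rightarrow> 'b) \<Rightarrow> 'a word set \<Rightarrow> 'b word set" where
  "raag_map V1 V2 E2 g X = raag_cls V2 E2 (map (\<lambda>(a, e). (g a, e)) (SOME w. w \<in> X))"

definition liftable ::
  "'a set \<Rightarrow> ('a \<Rightarrow> 'a \<Rightarrow> bool) \<Rightarrow> 'b set \<Rightarrow> ('b \<Rightarrow> 'b \<Rightarrow> bool) \<Rightarrow> ('a \<Rightarrow> 'b)
     \<Rightarrow> ('b word set \<Rightarrow> 'b word set) \<Rightarrow> bool" where
  "liftable VL EL VG EG p f \<longleftrightarrow>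
     (\<exists>F \<in> iso (RAAG VL EL) (RAAG VL EL).
        \<forall>x \<in> carrier (RAAG VL EL). f (raag_map VL VG EG p x) = raag_map VL VG EG p (F x))"

end

theory Submission
  imports Defs
begin

text \<open>
  Projecting \<phi>-domination to \<Gamma> shows lk(x) \<subseteq> st(y) for all x, y in the class C = [v]_\<phi>,
  and a permutation of such a set of vertices, extended by the identity, preserves adjacency:
  an edge is carried along the domination relations of its moved endpoints. So \<gamma> is a graph
  symmetry and induces an automorphism of A_\<Gamma>.

  For the lift, either all vertices of C are isolated or none is. If none is, every lift u of
  x \<in> C has a neighbour, and then there is exactly one u' over \<gamma>(x) with lk(u) \<subseteq> st(u'):
  two of them would be adjacent or would share a neighbour of u, which is impossible inside a
  fibre. The map u \<mapsto> u' is a graph automorphism of \<Lambda> covering \<gamma>, by the same domination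
  argument as on \<Gamma>. If all vertices of C are isolated, their fibres may have different sizes,
  so no graph automorphism need cover \<gamma>; instead, with a base point b_x chosen in each fibre,
  the automorphism of A_\<Lambda> sending u over x to b_\<gamma>(x) b_x^-1 u lifts \<gamma>.
\<close>

section \<open>Words and the defining relations of a right-angled Artin group\<close>

definition word_inv :: "'a word \<Rightarrow> 'a word" where
  "word_inv w = rev (map (\<lambda>(a, e). (a, \<not> e)) w)"

definition letter_image :: "('a \<Rightarrow> 'b word) \<Rightarrow> 'a \<times> bool \<Rightarrow> 'b word" where
  "letter_image s l = (if snd l then s (fst l) else word_inv (s (fst l)))"

definition word_subst :: "('a \<Rightarrow> 'b word) \<Rightarrow> 'a word \<Rightarrow> 'b word" where
  "word_subst s w = concat (map (letter_image s) w)"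

abbreviation generator_subst :: "('a \<Rightarrow> 'b) \<Rightarrow> 'a \<Rightarrow> 'b word" where
  "generator_subst g \<equiv> \<lambda>a. [(g a, True)]"

lemma word_inv_simps [simp]:
  "word_inv [] = []"
  "word_inv (l # w) = word_inv w @ [(fst l, \<not> snd l)]"
  "word_inv (w1 @ w2) = word_inv w2 @ word_inv w1"
  by (auto simp: word_inv_def case_prod_beta)

lemma word_inv_word_inv [simp]: "word_inv (word_inv w) = w"
  by (induction w) auto

lemma word_subst_simps [simp]:
  "word_subst s [] = []"
  "word_subst s (l # w) = letter_image s l @ word_subst s w"
  "word_subst s (w1 @ w2) = word_subst s w1 @ word_subst s w2"
  by (auto simp: word_subst_def)

lemma word_subst_word_inv: "word_subst t (word_inv w) = word_inv (word_subst t w)"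
  by (induction w) (auto simp: letter_image_def)

lemma word_subst_word_subst: "word_subst t (word_subst s w) = word_subst (\<lambda>a. word_subst t (s a)) w"
  by (induction w) (auto simp: letter_image_def word_subst_word_inv)

lemma word_subst_generator_subst: "word_subst (generator_subst g) w = map (\<lambda>(a, e). (g a, e)) w"
  by (induction w) (auto simp: letter_image_def)

lemma word_subst_generators [simp]: "word_subst (\<lambda>a. [(a, True)]) w = w"
  by (induction w) (auto simp: letter_image_def)

lemma word_subst_in_raag_words:
  assumes "w \<in> raag_words V1" and "\<And>a. a \<in> V1 \<Longrightarrow> s a \<in> raag_words V2"
  shows "word_subst s w \<in> raag_words V2"
  using assms by (induction w) (force simp: raag_words_def letter_image_def word_inv_def in_lists_conv_set)+

lemma equivclp_map:
  assumes "equivclp r x y" and "\<And>x y. r x y \<Longrightarrow> equivclp r' (f x) (f y)"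
  shows "equivclp r' (f x) (f y)"
  using assms(1)
proof (induction rule: equivclp_induct)
  case (step y z)
  then show ?case
    using assms(2) by (meson equivclp_sym equivclp_trans)
qed simp

lemma raag_eq_refl [simp]: "raag_eq E w w"
  by (simp add: raag_eq_def)

lemma raag_eq_sym: "raag_eq E x y \<Longrightarrow> raag_eq E y x"
  by (simp add: raag_eq_def equivclp_sym)

lemma raag_eq_trans [trans]: "raag_eq E x y \<Longrightarrow> raag_eq E y z \<Longrightarrow> raag_eq E x z"
  unfolding raag_eq_def by (rule equivclp_trans)

lemma raag_step_context: "raag_step E x y \<Longrightarrow> raag_step E (l @ x @ r) (l @ y @ r)"
proof (induction rule: raag_step.induct)
  case (cancel xs a b ys)
  then show ?case using raag_step.cancel[of E "l @ xs" a b "ys @ r"] by simp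
next
  case (commute a c xs b d ys)
  then show ?case using raag_step.commute[of E a c "l @ xs" b d "ys @ r"] by simp
qed

lemma raag_eq_context: "raag_eq E x y \<Longrightarrow> raag_eq E (l @ x @ r) (l @ y @ r)"
  unfolding raag_eq_def by (erule equivclp_map) (auto intro: raag_step_context)

lemma raag_eq_append: "raag_eq E x x' \<Longrightarrow> raag_eq E y y' \<Longrightarrow> raag_eq E (x @ y) (x' @ y')"
  using raag_eq_context[of E x x' "[]" y] raag_eq_context[of E y y' x' "[]"]
  by (auto intro: raag_eq_trans)

lemma raag_eq_cancel: "raag_eq E (l @ [(a, b), (a, \<not> b)] @ r) (l @ r)"
  unfolding raag_eq_def by (rule r_into_equivclp, rule raag_step.cancel)

lemma raag_eq_commute: "E a c \<Longrightarrow> raag_eq E [(a, b), (c, d)] [(c, d), (a, b)]"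
  unfolding raag_eq_def using raag_step.commute[of E a c "[]" b d "[]"] by auto

lemma raag_eq_inv_right: "raag_eq E (w @ word_inv w) []"
proof (induction w)
  case (Cons l w)
  have "raag_eq E ([l] @ (w @ word_inv w) @ [(fst l, \<not> snd l)]) ([] @ [l, (fst l, \<not> snd l)] @ [])"
    using raag_eq_context[OF Cons.IH, of "[l]" "[(fst l, \<not> snd l)]"] by simp
  also have "raag_eq E \<dots> []"
    using raag_eq_cancel[of E "[]" "fst l" "snd l" "[]"] by simp
  finally show ?case by simp
qed simp

lemma raag_eq_inv_left: "raag_eq E (word_inv w @ w) []"
  using raag_eq_inv_right[of E "word_inv w"] by simp

lemma raag_eq_word_inv:
  assumes "raag_eq E x y"
  shows "raag_eq E (word_inv x) (word_inv y)"
proof -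
  have "raag_eq E (word_inv x) (word_inv x @ y @ word_inv y)"
    using raag_eq_context[OF raag_eq_sym[OF raag_eq_inv_right[of E y]], of "word_inv x" "[]"] by simp
  also have "raag_eq E \<dots> (word_inv x @ x @ word_inv y)"
    using raag_eq_context[OF raag_eq_sym[OF assms]] by blast
  also have "raag_eq E \<dots> (word_inv y)"
    using raag_eq_context[OF raag_eq_inv_left[of E x], of "[]" "word_inv y"] by simp
  finally show ?thesis .
qed

section \<open>Homomorphisms defined by substituting words for generators\<close>

definition subst_commutes :: "('a \<Rightarrow> 'a \<Rightarrow> bool) \<Rightarrow> ('b \<Rightarrow> 'b \<Rightarrow> bool) \<Rightarrow> ('a \<Rightarrow> 'b word) \<Rightarrow> bool" where
  "subst_commutes E1 E2 s \<longleftrightarrow> (\<forall>a c b d. E1 a c \<longrightarrow>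
     raag_eq E2 (letter_image s (a, b) @ letter_image s (c, d)) (letter_image s (c, d) @ letter_image s (a, b)))"

lemma subst_commutes_generator_subst:
  "(\<And>a c. E1 a c \<Longrightarrow> E2 (g a) (g c)) \<Longrightarrow> subst_commutes E1 E2 (generator_subst g)"
  unfolding subst_commutes_def letter_image_def by (auto intro: raag_eq_commute)

lemma raag_eq_word_subst:
  assumes "raag_eq E1 w w'" and commutes: "subst_commutes E1 E2 s"
  shows "raag_eq E2 (word_subst s w) (word_subst s w')"
proof -
  have "raag_eq E2 (word_subst s x) (word_subst s y)" if "raag_step E1 x y" for x y
    using that
  proof (induction rule: raag_step.induct)
    case (cancel xs a b ys)
    have "raag_eq E2 (letter_image s (a, b) @ letter_image s (a, \<not> b)) []"
      by (cases b) (auto simp: letter_image_def raag_eq_inv_right raag_eq_inv_left)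
    from raag_eq_context[OF this, of "word_subst s xs" "word_subst s ys"] show ?case by simp
  next
    case (commute a c xs b d ys)
    then have "raag_eq E2 (letter_image s (a, b) @ letter_image s (c, d)) (letter_image s (c, d) @ letter_image s (a, b))"
      using commutes unfolding subst_commutes_def by blast
    from raag_eq_context[OF this, of "word_subst s xs" "word_subst s ys"] show ?case by simp
  qed
  then show ?thesis
    using assms(1) unfolding raag_eq_def by (elim equivclp_map) simp
qed

lemma raag_eq_word_subst_cong:
  assumes "\<And>a. a \<in> fst ` set w \<Longrightarrow> raag_eq E (s1 a) (s2 a)"
  shows "raag_eq E (word_subst s1 w) (word_subst s2 w)"
  using assms
proof (induction w)
  case (Cons l w)
  have "raag_eq E (s1 (fst l)) (s2 (fst l))"
    using Cons.prems by simp
  then have "raag_eq E (letter_image s1 l) (letter_image s2 l)"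
    by (auto simp: letter_image_def raag_eq_word_inv)
  with Cons show ?case by (auto intro: raag_eq_append)
qed simp

lemma raag_cls_eq:
  assumes "raag_eq E w w'"
  shows "raag_cls V E w = raag_cls V E w'"
proof -
  have "raag_eq E w x \<longleftrightarrow> raag_eq E w' x" for x
    using raag_eq_trans[OF assms] raag_eq_trans[OF raag_eq_sym[OF assms]] by blast
  then show ?thesis by (simp add: raag_cls_def)
qed

lemma some_in_raag_cls:
  fixes E :: "'a \<Rightarrow> 'a \<Rightarrow> bool"
  assumes "w \<in> raag_words V"
  defines "x \<equiv> SOME x. x \<in> raag_cls V E w"
  shows "x \<in> raag_words V" and "raag_eq E w x"
proof -
  have "w \<in> raag_cls V E w"
    using assms by (simp add: raag_cls_def)
  then have "x \<in> raag_cls V E w"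
    unfolding x_def by (rule someI)
  then show "x \<in> raag_words V" and "raag_eq E w x"
    unfolding raag_cls_def by blast+
qed

lemma carrier_RAAG: "carrier (RAAG V E) = raag_cls V E ` raag_words V"
  by (simp add: RAAG_def)

lemma mult_RAAG:
  assumes "w1 \<in> raag_words V" and "w2 \<in> raag_words V"
  shows "raag_cls V E w1 \<otimes>\<^bsub>RAAG V E\<^esub> raag_cls V E w2 = raag_cls V E (w1 @ w2)"
proof -
  let ?x = "SOME x. x \<in> raag_cls V E w1" and ?y = "SOME y. y \<in> raag_cls V E w2"
  have "raag_eq E (?x @ ?y) (w1 @ w2)"
    using raag_eq_append[OF raag_eq_sym raag_eq_sym] some_in_raag_cls(2)[OF assms(1), of E]
      some_in_raag_cls(2)[OF assms(2), of E] by blast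
  then have "raag_cls V E (?x @ ?y) = raag_cls V E (w1 @ w2)"
    by (rule raag_cls_eq)
  then show ?thesis
    by (simp add: RAAG_def)
qed

definition raag_subst :: "'b set \<Rightarrow> ('b \<Rightarrow> 'b \<Rightarrow> bool) \<Rightarrow> ('a \<Rightarrow> 'b word) \<Rightarrow> 'a word set \<Rightarrow> 'b word set" where
  "raag_subst V E s X = raag_cls V E (word_subst s (SOME w. w \<in> X))"

lemma raag_subst_raag_cls:
  assumes "w \<in> raag_words V1" and "subst_commutes E1 E2 s"
  shows "raag_subst V2 E2 s (raag_cls V1 E1 w) = raag_cls V2 E2 (word_subst s w)"
proof -
  have "raag_eq E1 (SOME x. x \<in> raag_cls V1 E1 w) w"
    using some_in_raag_cls(2)[OF assms(1)] by (rule raag_eq_sym)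
  then show ?thesis
    unfolding raag_subst_def by (intro raag_cls_eq raag_eq_word_subst[OF _ assms(2)])
qed

lemma raag_map_eq_raag_subst: "raag_map V1 V2 E2 g = raag_subst V2 E2 (generator_subst g)"
  by (simp add: fun_eq_iff raag_map_def raag_subst_def word_subst_generator_subst)

lemma subst_commutes_word_subst:
  assumes "subst_commutes E1 E2 s" and "subst_commutes E2 E3 t"
  shows "subst_commutes E1 E3 (\<lambda>a. word_subst t (s a))"
proof -
  have image: "letter_image (\<lambda>a. word_subst t (s a)) l = word_subst t (letter_image s l)" for l
    by (simp add: letter_image_def word_subst_word_inv)
  show ?thesis
    using raag_eq_word_subst[OF _ assms(2)] assms(1)
    unfolding subst_commutes_def image word_subst_simps(3)[symmetric] by blast
qed

lemma raag_subst_in_carrier: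
  assumes "X \<in> carrier (RAAG V1 E1)" and "subst_commutes E1 E2 s"
    and "\<And>a. a \<in> V1 \<Longrightarrow> s a \<in> raag_words V2"
  shows "raag_subst V2 E2 s X \<in> carrier (RAAG V2 E2)"
proof -
  obtain w where "w \<in> raag_words V1" and "X = raag_cls V1 E1 w"
    using assms(1) by (auto simp: carrier_RAAG)
  then show ?thesis
    using assms(2,3) by (auto simp: carrier_RAAG raag_subst_raag_cls intro: word_subst_in_raag_words)
qed

lemma raag_subst_raag_subst:
  assumes "X \<in> carrier (RAAG V1 E1)" and "subst_commutes E1 E2 s" and "subst_commutes E2 E3 t"
    and "\<And>a. a \<in> V1 \<Longrightarrow> s a \<in> raag_words V2"
  shows "raag_subst V3 E3 t (raag_subst V2 E2 s X) = raag_subst V3 E3 (\<lambda>a. word_subst t (s a)) X"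
proof -
  obtain w where w: "w \<in> raag_words V1" and X: "X = raag_cls V1 E1 w"
    using assms(1) by (auto simp: carrier_RAAG)
  have "word_subst s w \<in> raag_words V2"
    using w assms(4) by (rule word_subst_in_raag_words)
  then show ?thesis
    using assms(2,3) subst_commutes_word_subst[OF assms(2,3)]
    by (simp add: X raag_subst_raag_cls[OF w] raag_subst_raag_cls word_subst_word_subst)
qed

lemma raag_subst_cong:
  assumes "X \<in> carrier (RAAG V1 E1)" and "subst_commutes E1 E2 s1" and "subst_commutes E1 E2 s2"
    and "\<And>a. a \<in> V1 \<Longrightarrow> raag_eq E2 (s1 a) (s2 a)"
  shows "raag_subst V2 E2 s1 X = raag_subst V2 E2 s2 X"
proof -
  obtain w where w: "w \<in> raag_words V1" and X: "X = raag_cls V1 E1 w"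
    using assms(1) by (auto simp: carrier_RAAG)
  have "raag_eq E2 (word_subst s1 w) (word_subst s2 w)"
    using w assms(4) by (intro raag_eq_word_subst_cong) (auto simp: raag_words_def)
  then show ?thesis
    by (simp add: X raag_subst_raag_cls[OF w] assms(2,3) raag_cls_eq)
qed

lemma subst_commutes_generators: "subst_commutes E E (\<lambda>a. [(a, True)])"
  using subst_commutes_generator_subst[of E E "\<lambda>a. a"] by simp

lemma raag_subst_generators:
  assumes "X \<in> carrier (RAAG V E)"
  shows "raag_subst V E (\<lambda>a. [(a, True)]) X = X"
  using assms by (auto simp: carrier_RAAG raag_subst_raag_cls subst_commutes_generators)

lemma raag_subst_hom:
  assumes "subst_commutes E1 E2 s" and "\<And>a. a \<in> V1 \<Longrightarrow> s a \<in> raag_words V2"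
  shows "raag_subst V2 E2 s \<in> hom (RAAG V1 E1) (RAAG V2 E2)"
proof (rule homI)
  fix X Y
  assume "X \<in> carrier (RAAG V1 E1)" and "Y \<in> carrier (RAAG V1 E1)"
  then obtain w1 w2 where w: "w1 \<in> raag_words V1" "w2 \<in> raag_words V1"
    and XY: "X = raag_cls V1 E1 w1" "Y = raag_cls V1 E1 w2"
    by (auto simp: carrier_RAAG)
  have "word_subst s w1 \<in> raag_words V2" and "word_subst s w2 \<in> raag_words V2"
    using w assms(2) by (auto intro: word_subst_in_raag_words)
  moreover have "w1 @ w2 \<in> raag_words V1"
    using w by (simp add: raag_words_def)
  ultimately show "raag_subst V2 E2 s (X \<otimes>\<^bsub>RAAG V1 E1\<^esub> Y)
      = raag_subst V2 E2 s X \<otimes>\<^bsub>RAAG V2 E2\<^esub> raag_subst V2 E2 s Y"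
    using w by (simp add: XY mult_RAAG raag_subst_raag_cls assms(1))
qed (use assms raag_subst_in_carrier in blast)

lemma raag_subst_inverse:
  assumes "X \<in> carrier (RAAG V1 E1)"
    and "subst_commutes E1 E2 s" and "\<And>a. a \<in> V1 \<Longrightarrow> s a \<in> raag_words V2"
    and "subst_commutes E2 E1 t"
    and "\<And>a. a \<in> V1 \<Longrightarrow> raag_eq E1 (word_subst t (s a)) [(a, True)]"
  shows "raag_subst V1 E1 t (raag_subst V2 E2 s X) = X"
proof -
  have "raag_subst V1 E1 t (raag_subst V2 E2 s X) = raag_subst V1 E1 (\<lambda>a. word_subst t (s a)) X"
    using assms(1,2,4,3) by (rule raag_subst_raag_subst)
  also have "\<dots> = raag_subst V1 E1 (\<lambda>a. [(a, True)]) X"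
    using assms(1) subst_commutes_word_subst[OF assms(2,4)] subst_commutes_generators assms(5)
    by (rule raag_subst_cong)
  also have "\<dots> = X"
    using assms(1) by (rule raag_subst_generators)
  finally show ?thesis .
qed

lemma raag_subst_iso:
  assumes "subst_commutes E1 E2 s" and "\<And>a. a \<in> V1 \<Longrightarrow> s a \<in> raag_words V2"
    and "subst_commutes E2 E1 t" and "\<And>a. a \<in> V2 \<Longrightarrow> t a \<in> raag_words V1"
    and "\<And>a. a \<in> V1 \<Longrightarrow> raag_eq E1 (word_subst t (s a)) [(a, True)]"
    and "\<And>a. a \<in> V2 \<Longrightarrow> raag_eq E2 (word_subst s (t a)) [(a, True)]"
  shows "raag_subst V2 E2 s \<in> iso (RAAG V1 E1) (RAAG V2 E2)"
proof -
  have "bij_betw (raag_subst V2 E2 s) (carrier (RAAG V1 E1)) (carrier (RAAG V2 E2))"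
  proof (rule bij_betwI[where g = "raag_subst V1 E1 t"])
    show "raag_subst V2 E2 s \<in> carrier (RAAG V1 E1) \<rightarrow> carrier (RAAG V2 E2)"
      using raag_subst_in_carrier assms(1,2) by blast
    show "raag_subst V1 E1 t \<in> carrier (RAAG V2 E2) \<rightarrow> carrier (RAAG V1 E1)"
      using raag_subst_in_carrier assms(3,4) by blast
  qed (use raag_subst_inverse[OF _ assms(1,2,3,5)] raag_subst_inverse[OF _ assms(3,4,1,6)] in auto)
  then show ?thesis
    using raag_subst_hom[OF assms(1,2)] by (simp add: iso_def)
qed

section \<open>Domination in simplicial graphs\<close>

lemma simple_graph_edgeD:
  "simple_graph V E \<Longrightarrow> E x y \<Longrightarrow> x \<in> V \<and> y \<in> V \<and> x \<noteq> y \<and> E y x"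
  by (auto simp: simple_graph_def)

lemma graph_aut_edge:
  assumes "simple_graph V E" and "graph_aut V E g" and "E x y"
  shows "E (g x) (g y)"
  using assms simple_graph_edgeD[OF assms(1,3)] by (auto simp: graph_aut_def)

lemma bij_betw_inv_into_self:
  assumes "bij_betw g C C" and "x \<in> C"
  shows "g x \<in> C" and "inv_into C g x \<in> C" and "inv_into C g (g x) = x" and "g (inv_into C g x) = x"
  using bij_betwE[OF assms(1)] bij_betwE[OF bij_betw_inv_into[OF assms(1)]]
    bij_betw_inv_into_left[OF assms] bij_betw_inv_into_right[OF assms] assms(2) by auto

lemma lk_subset_st_iff:
  assumes "simple_graph V E"
  shows "lk V E u \<subseteq> st V E u' \<longleftrightarrow> (\<forall>y. E u y \<longrightarrow> y = u' \<or> E u' y)"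
  using simple_graph_edgeD[OF assms] by (auto simp: lk_def st_def nbrs_def)

lemma lk_subset_st_self: "lk V E u \<subseteq> st V E u"
  by (auto simp: lk_def st_def)

lemma lk_subset_st_trans:
  assumes "simple_graph V E" and "lk V E u \<subseteq> st V E u'" and "lk V E u' \<subseteq> st V E u''" and "u \<noteq> u''"
  shows "lk V E u \<subseteq> st V E u''"
  using assms simple_graph_edgeD[OF assms(1)] unfolding lk_subset_st_iff[OF assms(1)] by metis

lemma has_nbr_if_lk_subset_st:
  assumes "simple_graph V E" and "lk V E x \<subseteq> st V E y" and "E x z"
  shows "\<exists>w. E y w"
  using assms simple_graph_edgeD[OF assms(1)] unfolding lk_subset_st_iff[OF assms(1)] by metis

definition extend_by_id :: "'a set \<Rightarrow> ('a \<Rightarrow> 'a) \<Rightarrow> 'a \<Rightarrow> 'a" where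
  "extend_by_id D g x = (if x \<in> D then g x else x)"

definition dominating_map :: "'a set \<Rightarrow> ('a \<Rightarrow> 'a \<Rightarrow> bool) \<Rightarrow> 'a set \<Rightarrow> ('a \<Rightarrow> 'a) \<Rightarrow> bool" where
  "dominating_map V E D g \<longleftrightarrow> D \<subseteq> V \<and> g ` D \<subseteq> D \<and> (\<forall>a\<in>D. lk V E a \<subseteq> st V E (g a))"

lemma dominating_map_edge:
  assumes "simple_graph V E" and "dominating_map V E D g" and "inj_on g D" and "E a c"
  shows "E (extend_by_id D g a) (extend_by_id D g c)"
proof -
  have dom: "y = g x \<or> E (g x) y" if "x \<in> D" and "E x y" for x y
    using assms(2) that unfolding dominating_map_def lk_subset_st_iff[OF assms(1)] by blast
  have sym: "E y x" if "E x y" for x y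
    using simple_graph_edgeD[OF assms(1) that] by blast
  have g_in: "g x \<in> D" if "x \<in> D" for x
    using assms(2) that by (auto simp: dominating_map_def)
  consider "a \<notin> D" "c \<notin> D" | "a \<in> D" "c \<notin> D" | "a \<notin> D" "c \<in> D" | "a \<in> D" "c \<in> D"
    by blast
  then show ?thesis
  proof cases
    case 1
    then show ?thesis using assms(4) by (simp add: extend_by_id_def)
  next
    case 2
    then show ?thesis using dom[of a c] g_in assms(4) by (auto simp: extend_by_id_def)
  next
    case 3
    then show ?thesis using dom[of c a] g_in sym assms(4) by (auto simp: extend_by_id_def)
  next
    case 4
    have "a \<noteq> c"
      using simple_graph_edgeD[OF assms(1,4)] by blast
    then have "g a \<noteq> g c"
      using assms(3) 4 by (auto dest: inj_onD)
    \<comment> \<open>Both endpoints move: chase the edge through the two domination relations.\<close>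
    then show ?thesis
      using 4 dom sym assms(4) by (simp add: extend_by_id_def) metis
  qed
qed

lemma graph_aut_extend_by_id:
  assumes "simple_graph V E" and "dominating_map V E D g" and "dominating_map V E D h"
    and "\<And>a. a \<in> D \<Longrightarrow> h (g a) = a" and "\<And>a. a \<in> D \<Longrightarrow> g (h a) = a"
  shows "graph_aut V E (extend_by_id D g)"
proof -
  have D: "D \<subseteq> V" "g ` D \<subseteq> D" "h ` D \<subseteq> D"
    using assms(2,3) by (auto simp: dominating_map_def)
  have inverse: "extend_by_id D h (extend_by_id D g x) = x" "extend_by_id D g (extend_by_id D h x) = x" for x
    using D assms(4,5) by (auto simp: extend_by_id_def)
  have maps_to: "extend_by_id D k \<in> V \<rightarrow> V" if "k ` D \<subseteq> D" for k
    using D(1) that by (auto simp: extend_by_id_def image_subset_iff subset_iff)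
  have "inj_on g D" "inj_on h D"
    using assms(4,5) by (metis inj_on_inverseI)+
  then have edge: "E (extend_by_id D g x) (extend_by_id D g y)" "E (extend_by_id D h x) (extend_by_id D h y)"
    if "E x y" for x y
    using dominating_map_edge[OF assms(1)] assms(2,3) that by blast+
  have "E x y" if "E (extend_by_id D g x) (extend_by_id D g y)" for x y
    using edge(2)[OF that] by (simp add: inverse(1))
  then show ?thesis
    unfolding graph_aut_def using bij_betwI[OF maps_to maps_to, OF D(2,3) inverse] edge(1) by blast
qed

lemma graph_aut_permute_dominating_class:
  assumes "simple_graph V E" and "C \<subseteq> V" and "\<And>x y. x \<in> C \<Longrightarrow> y \<in> C \<Longrightarrow> lk V E x \<subseteq> st V E y"
    and "bij_betw g C C"
  shows "graph_aut V E (extend_by_id C g)"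
proof (rule graph_aut_extend_by_id[where h = "inv_into C g"])
  have "dominating_map V E C k" if "k ` C \<subseteq> C" for k
    using assms(2,3) that unfolding dominating_map_def by blast
  then show "dominating_map V E C g" and "dominating_map V E C (inv_into C g)"
    using bij_betw_imp_surj_on[OF assms(4)] bij_betw_imp_surj_on[OF bij_betw_inv_into[OF assms(4)]]
    by simp_all
qed (use assms(1) bij_betw_inv_into_self[OF assms(4)] in simp_all)

section \<open>Liftable automorphisms\<close>

lemma raag_map_iso_of_graph_aut:
  assumes "simple_graph V E" and "graph_aut V E g"
  shows "raag_map V V E g \<in> iso (RAAG V E) (RAAG V E)"
proof -
  let ?h = "inv_into V g"
  have bij: "bij_betw g V V"
    using assms(2) by (simp add: graph_aut_def)
  note g_in = bij_betw_inv_into_self(1)[OF bij] and h_in = bij_betw_inv_into_self(2)[OF bij]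
    and h_g = bij_betw_inv_into_self(3)[OF bij] and g_h = bij_betw_inv_into_self(4)[OF bij]
  have h_edge: "E (?h x) (?h y)" if "E x y" for x y
  proof -
    have "x \<in> V" and "y \<in> V"
      using simple_graph_edgeD[OF assms(1) that] by simp_all
    then show ?thesis
      using assms(2) that h_in g_h unfolding graph_aut_def by metis
  qed
  show ?thesis
    unfolding raag_map_eq_raag_subst
  proof (rule raag_subst_iso[where t = "generator_subst ?h"])
    show "subst_commutes E E (generator_subst g)"
      using graph_aut_edge[OF assms] by (rule subst_commutes_generator_subst)
    show "subst_commutes E E (generator_subst ?h)"
      using h_edge by (rule subst_commutes_generator_subst)
  qed (simp_all add: g_in h_in g_h h_g raag_words_def letter_image_def)
qed

lemma raag_subst_lifts:
  assumes "X \<in> carrier (RAAG VL EL)"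
    and s_commutes: "subst_commutes EL EL s" and s_words: "\<And>a. a \<in> VL \<Longrightarrow> s a \<in> raag_words VL"
    and p_edge: "\<And>x y. EL x y \<Longrightarrow> EG (p x) (p y)" and p_in: "\<And>a. a \<in> VL \<Longrightarrow> p a \<in> VG"
    and f_edge: "\<And>x y. EG x y \<Longrightarrow> EG (f x) (f y)"
    and lifts: "\<And>a. a \<in> VL \<Longrightarrow> raag_eq EG (word_subst (generator_subst p) (s a)) [(f (p a), True)]"
  shows "raag_map VG VG EG f (raag_map VL VG EG p X) = raag_map VL VG EG p (raag_subst VL EL s X)"
proof -
  have p_commutes: "subst_commutes EL EG (generator_subst p)"
    using p_edge by (rule subst_commutes_generator_subst)
  have f_commutes: "subst_commutes EG EG (generator_subst f)"
    using f_edge by (rule subst_commutes_generator_subst)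
  have p_words: "generator_subst p a \<in> raag_words VG" if "a \<in> VL" for a
    using p_in[OF that] by (simp add: raag_words_def)
  have "raag_map VG VG EG f (raag_map VL VG EG p X)
      = raag_subst VG EG (\<lambda>a. word_subst (generator_subst f) (generator_subst p a)) X"
    unfolding raag_map_eq_raag_subst
    using assms(1) p_commutes f_commutes p_words by (rule raag_subst_raag_subst)
  also have "\<dots> = raag_subst VG EG (\<lambda>a. word_subst (generator_subst p) (s a)) X"
  proof (rule raag_subst_cong[OF assms(1)])
    show "raag_eq EG (word_subst (generator_subst f) (generator_subst p a)) (word_subst (generator_subst p) (s a))"
      if "a \<in> VL" for a
      using raag_eq_sym[OF lifts[OF that]] by (simp add: letter_image_def)
  qed (use subst_commutes_word_subst[OF p_commutes f_commutes]
      subst_commutes_word_subst[OF s_commutes p_commutes] in blast)+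
  also have "\<dots> = raag_map VL VG EG p (raag_subst VL EL s X)"
    unfolding raag_map_eq_raag_subst
    using assms(1) s_commutes p_commutes s_words by (rule raag_subst_raag_subst[symmetric])
  finally show ?thesis .
qed

lemma liftableI:
  assumes "raag_subst VL EL s \<in> iso (RAAG VL EL) (RAAG VL EL)"
    and "subst_commutes EL EL s" and "\<And>a. a \<in> VL \<Longrightarrow> s a \<in> raag_words VL"
    and "\<And>x y. EL x y \<Longrightarrow> EG (p x) (p y)" and "\<And>a. a \<in> VL \<Longrightarrow> p a \<in> VG"
    and "\<And>x y. EG x y \<Longrightarrow> EG (f x) (f y)"
    and "\<And>a. a \<in> VL \<Longrightarrow> raag_eq EG (word_subst (generator_subst p) (s a)) [(f (p a), True)]"
  shows "liftable VL EL VG EG p (raag_map VG VG EG f)"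
  unfolding liftable_def using assms raag_subst_lifts by blast

lemma liftable_of_graph_aut:
  assumes "simple_graph VL EL" and "graph_aut VL EL \<mu>"
    and "\<And>x y. EL x y \<Longrightarrow> EG (p x) (p y)" and "\<And>a. a \<in> VL \<Longrightarrow> p a \<in> VG"
    and "\<And>x y. EG x y \<Longrightarrow> EG (f x) (f y)"
    and "\<And>a. a \<in> VL \<Longrightarrow> p (\<mu> a) = f (p a)"
  shows "liftable VL EL VG EG p (raag_map VG VG EG f)"
proof (rule liftableI[where s = "generator_subst \<mu>"])
  show "raag_subst VL EL (generator_subst \<mu>) \<in> iso (RAAG VL EL) (RAAG VL EL)"
    using raag_map_iso_of_graph_aut[OF assms(1,2)] by (simp add: raag_map_eq_raag_subst)
  show "subst_commutes EL EL (generator_subst \<mu>)"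
    using assms(1,2) by (auto intro: subst_commutes_generator_subst graph_aut_edge)
  show "a \<in> VL \<Longrightarrow> generator_subst \<mu> a \<in> raag_words VL" for a
    using assms(2) bij_betwE by (fastforce simp: raag_words_def graph_aut_def)
qed (simp_all add: assms letter_image_def)

section \<open>Coverings\<close>

locale graph_covering =
  fixes VL :: "'a set" and EL :: "'a \<Rightarrow> 'a \<Rightarrow> bool"
    and VG :: "'b set" and EG :: "'b \<Rightarrow> 'b \<Rightarrow> bool" and p :: "'a \<Rightarrow> 'b"
  assumes simple_L: "simple_graph VL EL" and simple_G: "simple_graph VG EG"
    and covering: "covering_map VL EL VG EG p"
begin

lemmas edgeD_L = simple_graph_edgeD[OF simple_L]
lemmas edgeD_G = simple_graph_edgeD[OF simple_G]

lemma p_in: "u \<in> VL \<Longrightarrow> p u \<in> VG"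
  using covering by (auto simp: covering_map_def)

lemma p_surj: "x \<in> VG \<Longrightarrow> \<exists>u\<in>VL. p u = x"
  using covering by (auto simp: covering_map_def)

lemma p_edge: "EL x y \<Longrightarrow> EG (p x) (p y)"
  using covering by (auto simp: covering_map_def)

lemma fibre_not_adjacent: "p a = p c \<Longrightarrow> \<not> EL a c"
  using p_edge edgeD_G by fastforce

lemma lift_edge:
  assumes "u \<in> VL" and "EG (p u) y"
  obtains c where "EL u c" and "p c = y"
proof -
  have "y \<in> nbrs VG EG (p u)"
    using assms edgeD_G by (auto simp: nbrs_def)
  then have "y \<in> p ` nbrs VL EL u"
    using covering assms(1) by (auto simp: covering_map_def bij_betw_def)
  then show ?thesis
    using that by (auto simp: nbrs_def)
qed

lemma nbrs_fibre_unique: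
  assumes "EL w a" and "EL w c" and "p a = p c"
  shows "a = c"
proof -
  have "inj_on p (nbrs VL EL w)"
    using covering edgeD_L[OF assms(1)] by (auto simp: covering_map_def bij_betw_def)
  then show ?thesis
    using assms edgeD_L by (auto simp: nbrs_def dest: inj_onD)
qed

lemma dominating_in_fibre_unique:
  assumes "EL u y" and "lk VL EL u \<subseteq> st VL EL a" and "lk VL EL u \<subseteq> st VL EL c" and "p a = p c"
  shows "a = c"
  using assms fibre_not_adjacent nbrs_fibre_unique edgeD_L
  unfolding lk_subset_st_iff[OF simple_L] by metis

lemma phi_le_trans:
  assumes "phi_le VL EL p x y" and "phi_le VL EL p y z"
  shows "phi_le VL EL p x z"
  unfolding phi_le_def
proof (intro ballI impI)
  fix u assume "u \<in> VL" and "p u = x"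
  then obtain u' where u': "u' \<in> VL" "p u' = y" "lk VL EL u \<subseteq> st VL EL u'"
    using assms(1) by (auto simp: phi_le_def)
  then obtain u'' where u'': "u'' \<in> VL" "p u'' = z" "lk VL EL u' \<subseteq> st VL EL u''"
    using assms(2) by (auto simp: phi_le_def)
  have "lk VL EL u \<subseteq> st VL EL u''"
  proof (cases "u = u''")
    case True
    then show ?thesis by (simp add: lk_subset_st_self)
  qed (use lk_subset_st_trans[OF simple_L u'(3) u''(3)] in simp)
  then show "\<exists>u'\<in>VL. p u' = z \<and> lk VL EL u \<subseteq> st VL EL u'"
    using u'' by blast
qed

lemma lk_subset_st_project:
  assumes "u \<in> VL" and "lk VL EL u \<subseteq> st VL EL u'"
  shows "lk VG EG (p u) \<subseteq> st VG EG (p u')"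
  unfolding lk_subset_st_iff[OF simple_G]
proof (intro allI impI)
  fix z assume "EG (p u) z"
  with assms(1) obtain c where "EL u c" and "p c = z"
    by (rule lift_edge)
  then show "z = p u' \<or> EG (p u') z"
    using assms(2) p_edge unfolding lk_subset_st_iff[OF simple_L] by blast
qed

lemma phi_le_project:
  assumes "x \<in> VG" and "phi_le VL EL p x y"
  shows "lk VG EG x \<subseteq> st VG EG y"
  using assms p_surj lk_subset_st_project unfolding phi_le_def by metis

end

section \<open>Lifting a permutation of a domination class\<close>

text \<open>The THE is only meaningful when u has a neighbour: then the dominating vertex in the
  fibre is unique (dominating_in_fibre_unique).\<close>

definition dominating_lift :: "'a set \<Rightarrow> ('a \<Rightarrow> 'a \<Rightarrow> bool) \<Rightarrow> ('a \<Rightarrow> 'b) \<Rightarrow> ('b \<Rightarrow> 'b) \<Rightarrow> 'a \<Rightarrow> 'a" where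
  "dominating_lift VL EL p g u = (THE u'. u' \<in> VL \<and> p u' = g (p u) \<and> lk VL EL u \<subseteq> st VL EL u')"

definition fibre_base :: "'a set \<Rightarrow> ('a \<Rightarrow> 'b) \<Rightarrow> 'b \<Rightarrow> 'a" where
  "fibre_base VL p x = (SOME u. u \<in> VL \<and> p u = x)"

definition base_shift_subst :: "'a set \<Rightarrow> ('a \<Rightarrow> 'b) \<Rightarrow> 'b set \<Rightarrow> ('b \<Rightarrow> 'b) \<Rightarrow> 'a \<Rightarrow> 'a word" where
  "base_shift_subst VL p C g a =
    (if a \<in> VL \<and> p a \<in> C then
       (if a = fibre_base VL p (p a) then [(fibre_base VL p (g (p a)), True)]
        else [(fibre_base VL p (g (p a)), True), (fibre_base VL p (p a), False), (a, True)])
     else [(a, True)])"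

locale covering_class = graph_covering +
  fixes C :: "'b set"
  assumes class_subset: "C \<subseteq> VG"
    and class_phi_le: "\<And>x y. x \<in> C \<Longrightarrow> y \<in> C \<Longrightarrow> phi_le VL EL p x y"
begin

lemma class_lk_subset_st: "x \<in> C \<Longrightarrow> y \<in> C \<Longrightarrow> lk VG EG x \<subseteq> st VG EG y"
  using class_subset by (intro phi_le_project class_phi_le) auto

lemma graph_aut_class_perm:
  assumes "bij_betw g C C"
  shows "graph_aut VG EG (extend_by_id C g)"
  using simple_G class_subset class_lk_subset_st assms by (rule graph_aut_permute_dominating_class)

lemma class_perm_edge:
  assumes "bij_betw g C C" and "EG x y"
  shows "EG (extend_by_id C g x) (extend_by_id C g y)"
  using simple_G graph_aut_class_perm[OF assms(1)] assms(2) by (rule graph_aut_edge)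

lemma class_isolated_or_not: "(\<forall>x\<in>C. \<exists>z. EG x z) \<or> (\<forall>x\<in>C. \<forall>z. \<not> EG x z)"
proof (rule ccontr)
  assume "\<not> ?thesis"
  then obtain x y z where "x \<in> C" "EG x z" "y \<in> C" "\<forall>w. \<not> EG y w"
    by blast
  then show False
    using has_nbr_if_lk_subset_st[OF simple_G class_lk_subset_st] by blast
qed

abbreviation class_fibres :: "'a set" where
  "class_fibres \<equiv> {u \<in> VL. p u \<in> C}"

context
  assumes nonisolated: "\<And>x. x \<in> C \<Longrightarrow> \<exists>z. EG x z"
begin

lemma class_fibres_has_nbr:
  assumes "u \<in> VL" and "p u \<in> C"
  obtains y where "EL u y"
proof -
  obtain z where "EG (p u) z"
    using nonisolated assms(2) by blast
  with assms(1) show ?thesis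
    using that by (elim lift_edge)
qed

lemma dominating_lift_spec:
  assumes "u \<in> VL" and "p u \<in> C" and "g (p u) \<in> C"
  defines "u' \<equiv> dominating_lift VL EL p g u"
  shows "u' \<in> VL" and "p u' = g (p u)" and "lk VL EL u \<subseteq> st VL EL u'"
proof -
  obtain y where "EL u y"
    using assms(1,2) by (rule class_fibres_has_nbr)
  moreover obtain v where "v \<in> VL" "p v = g (p u)" "lk VL EL u \<subseteq> st VL EL v"
    using class_phi_le[OF assms(2,3)] assms(1) by (auto simp: phi_le_def)
  ultimately have "\<exists>!v. v \<in> VL \<and> p v = g (p u) \<and> lk VL EL u \<subseteq> st VL EL v"
    using dominating_in_fibre_unique[OF \<open>EL u y\<close>] by (metis (no_types, lifting))
  then have "u' \<in> VL \<and> p u' = g (p u) \<and> lk VL EL u \<subseteq> st VL EL u'"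
    unfolding u'_def dominating_lift_def by (rule theI')
  then show "u' \<in> VL" and "p u' = g (p u)" and "lk VL EL u \<subseteq> st VL EL u'"
    by simp_all
qed

lemma dominating_lift_inverse:
  assumes "\<And>x. x \<in> C \<Longrightarrow> g x \<in> C" and "\<And>x. x \<in> C \<Longrightarrow> h x \<in> C"
    and "\<And>x. x \<in> C \<Longrightarrow> h (g x) = x" and "u \<in> VL" and "p u \<in> C"
  shows "dominating_lift VL EL p h (dominating_lift VL EL p g u) = u"
proof (rule ccontr)
  let ?u1 = "dominating_lift VL EL p g u"
  let ?u2 = "dominating_lift VL EL p h ?u1"
  assume ne: "?u2 \<noteq> u"
  have u1: "?u1 \<in> VL" "p ?u1 = g (p u)" "lk VL EL u \<subseteq> st VL EL ?u1"
    using dominating_lift_spec assms by auto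
  then have u2: "p ?u2 = p u" "lk VL EL ?u1 \<subseteq> st VL EL ?u2"
    using dominating_lift_spec[of ?u1 h] assms by auto
  obtain y where "EL u y"
    using assms(4,5) by (rule class_fibres_has_nbr)
  moreover have "lk VL EL u \<subseteq> st VL EL ?u2"
    using lk_subset_st_trans[OF simple_L u1(3) u2(2) ne[symmetric]] .
  ultimately show False
    using dominating_in_fibre_unique lk_subset_st_self u2(1) ne by metis
qed

lemma dominating_map_dominating_lift:
  assumes "\<And>x. x \<in> C \<Longrightarrow> g x \<in> C"
  shows "dominating_map VL EL class_fibres (dominating_lift VL EL p g)"
  using dominating_lift_spec assms by (auto simp: dominating_map_def)

lemma graph_aut_dominating_lift:
  assumes "bij_betw g C C"
  shows "graph_aut VL EL (extend_by_id class_fibres (dominating_lift VL EL p g))"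
  using bij_betw_inv_into_self[OF assms] dominating_map_dominating_lift dominating_lift_inverse
  by (intro graph_aut_extend_by_id[OF simple_L, where h = "dominating_lift VL EL p (inv_into C g)"]) auto

lemma p_extend_by_id_dominating_lift:
  assumes "\<And>x. x \<in> C \<Longrightarrow> g x \<in> C" and "u \<in> VL"
  shows "p (extend_by_id class_fibres (dominating_lift VL EL p g) u) = extend_by_id C g (p u)"
  using dominating_lift_spec assms by (simp add: extend_by_id_def)

lemma liftable_nonisolated_class:
  assumes "bij_betw g C C"
  shows "liftable VL EL VG EG p (raag_map VG VG EG (extend_by_id C g))"
proof (rule liftable_of_graph_aut[OF simple_L graph_aut_dominating_lift[OF assms]])
  show "p (extend_by_id class_fibres (dominating_lift VL EL p g) a) = extend_by_id C g (p a)"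
    if "a \<in> VL" for a
    using bij_betw_inv_into_self(1)[OF assms] that by (rule p_extend_by_id_dominating_lift)
qed (simp_all add: p_edge p_in class_perm_edge[OF assms])

end

context
  assumes isolated: "\<And>x z. x \<in> C \<Longrightarrow> \<not> EG x z"
begin

lemma fibre_base_in_fibre: "x \<in> C \<Longrightarrow> fibre_base VL p x \<in> VL \<and> p (fibre_base VL p x) = x"
proof -
  assume "x \<in> C"
  then have "\<exists>u. u \<in> VL \<and> p u = x"
    using class_subset p_surj by blast
  then show ?thesis
    unfolding fibre_base_def by (rule someI_ex)
qed

lemma subst_commutes_base_shift_subst: "subst_commutes EL EL (base_shift_subst VL p C g)"
  unfolding subst_commutes_def
proof (intro allI impI)
  fix a c b d assume "EL a c"
  then have "\<not> (a \<in> VL \<and> p a \<in> C)" and "\<not> (c \<in> VL \<and> p c \<in> C)"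
    using isolated p_edge edgeD_G by metis+
  then have "base_shift_subst VL p C g a = [(a, True)]" and "base_shift_subst VL p C g c = [(c, True)]"
    by (auto simp: base_shift_subst_def)
  then show "raag_eq EL (letter_image (base_shift_subst VL p C g) (a, b) @ letter_image (base_shift_subst VL p C g) (c, d))
      (letter_image (base_shift_subst VL p C g) (c, d) @ letter_image (base_shift_subst VL p C g) (a, b))"
    using raag_eq_commute[of EL a c] \<open>EL a c\<close> by (simp add: letter_image_def)
qed

context
  fixes g h
  assumes g_in: "\<And>x. x \<in> C \<Longrightarrow> g x \<in> C" and h_in: "\<And>x. x \<in> C \<Longrightarrow> h x \<in> C"
    and h_g: "\<And>x. x \<in> C \<Longrightarrow> h (g x) = x"
begin

lemma base_shift_subst_in_raag_words: "a \<in> VL \<Longrightarrow> base_shift_subst VL p C g a \<in> raag_words VL"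
  using fibre_base_in_fibre g_in by (auto simp: base_shift_subst_def raag_words_def)

lemma base_shift_subst_inverse:
  assumes "a \<in> VL"
  shows "raag_eq EL (word_subst (base_shift_subst VL p C h) (base_shift_subst VL p C g a)) [(a, True)]"
proof (cases "p a \<in> C")
  case True
  define x where "x = p a"
  let ?b = "fibre_base VL p"
  have x: "x \<in> C" "g x \<in> C" "h x \<in> C"
    using True g_in h_in by (auto simp: x_def)
  have shift_base: "base_shift_subst VL p C h (?b (g x)) = [(?b x, True)]"
    using fibre_base_in_fibre[OF x(2)] x h_g by (simp add: base_shift_subst_def)
  show ?thesis
  proof (cases "a = ?b x")
    case True
    then show ?thesis
      using assms x shift_base by (simp add: base_shift_subst_def letter_image_def x_def)
  next
    case False
    have "word_subst (base_shift_subst VL p C h) (base_shift_subst VL p C g a)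
        = [(?b x, True)] @ [(?b (h x), False), (?b (h x), True)] @ [(?b x, False), (a, True)]"
      using assms x False shift_base fibre_base_in_fibre[OF x(1)]
      by (simp add: base_shift_subst_def letter_image_def x_def)
    also have "raag_eq EL \<dots> ([] @ [(?b x, True), (?b x, False)] @ [(a, True)])"
      using raag_eq_cancel[of EL "[(?b x, True)]" "?b (h x)" False] by simp
    also have "raag_eq EL \<dots> [(a, True)]"
      using raag_eq_cancel[of EL "[]" "?b x" True] by simp
    finally show ?thesis .
  qed
qed (use assms in \<open>simp add: base_shift_subst_def letter_image_def\<close>)

lemma base_shift_subst_lifts:
  assumes "a \<in> VL"
  shows "raag_eq EG (word_subst (generator_subst p) (base_shift_subst VL p C g a))
           [(extend_by_id C g (p a), True)]"
proof (cases "p a \<in> C")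
  case True
  have "word_subst (generator_subst p) (base_shift_subst VL p C g a) = [(g (p a), True)]
      \<or> word_subst (generator_subst p) (base_shift_subst VL p C g a)
        = [(g (p a), True)] @ [(p a, False), (p a, True)] @ []"
    using assms True fibre_base_in_fibre g_in by (simp add: base_shift_subst_def letter_image_def)
  then show ?thesis
    using raag_eq_cancel[of EG "[(g (p a), True)]" "p a" False "[]"] True
    by (auto simp: extend_by_id_def)
qed (use assms in \<open>simp add: base_shift_subst_def letter_image_def extend_by_id_def\<close>)

end

lemma liftable_isolated_class:
  assumes "bij_betw g C C"
  shows "liftable VL EL VG EG p (raag_map VG VG EG (extend_by_id C g))"
proof -
  let ?h = "inv_into C g"
  note g_in = bij_betw_inv_into_self(1)[OF assms] and h_in = bij_betw_inv_into_self(2)[OF assms]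
    and h_g = bij_betw_inv_into_self(3)[OF assms] and g_h = bij_betw_inv_into_self(4)[OF assms]
  have "raag_subst VL EL (base_shift_subst VL p C g) \<in> iso (RAAG VL EL) (RAAG VL EL)"
  proof (rule raag_subst_iso[where t = "base_shift_subst VL p C ?h"])
    fix a assume "a \<in> VL"
    show "base_shift_subst VL p C g a \<in> raag_words VL"
      using g_in h_in h_g \<open>a \<in> VL\<close> by (rule base_shift_subst_in_raag_words)
    show "base_shift_subst VL p C ?h a \<in> raag_words VL"
      using h_in g_in g_h \<open>a \<in> VL\<close> by (rule base_shift_subst_in_raag_words)
    show "raag_eq EL (word_subst (base_shift_subst VL p C ?h) (base_shift_subst VL p C g a)) [(a, True)]"
      using g_in h_in h_g \<open>a \<in> VL\<close> by (rule base_shift_subst_inverse)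
    show "raag_eq EL (word_subst (base_shift_subst VL p C g) (base_shift_subst VL p C ?h a)) [(a, True)]"
      using h_in g_in g_h \<open>a \<in> VL\<close> by (rule base_shift_subst_inverse)
  qed (rule subst_commutes_base_shift_subst)+
  then show ?thesis
  proof (rule liftableI)
    fix a assume "a \<in> VL"
    show "base_shift_subst VL p C g a \<in> raag_words VL"
      using g_in h_in h_g \<open>a \<in> VL\<close> by (rule base_shift_subst_in_raag_words)
    show "raag_eq EG (word_subst (generator_subst p) (base_shift_subst VL p C g a))
        [(extend_by_id C g (p a), True)]"
      using g_in h_in h_g \<open>a \<in> VL\<close> by (rule base_shift_subst_lifts)
  qed (simp_all add: subst_commutes_base_shift_subst p_edge p_in class_perm_edge[OF assms])
qed

end

end

theorem lemma4p1:
  fixes VL :: "'a set" and EL :: "'a \<Rightarrow> 'a \<Rightarrow> bool"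
    and VG :: "'b set" and EG :: "'b \<Rightarrow> 'b \<Rightarrow> bool"
    and p :: "'a \<Rightarrow> 'b" and v :: 'b and \<gamma>v :: "'b \<Rightarrow> 'b"
  assumes "simple_graph VL EL" and "simple_graph VG EG"
    and "regular_covering VL EL VG EG p"
    and "v \<in> VG"
    and "bij_betw \<gamma>v (phi_class VL EL VG p v) (phi_class VL EL VG p v)"
  defines "\<gamma> \<equiv> (\<lambda>w. if w \<in> phi_class VL EL VG p v then \<gamma>v w else w)"
  shows "graph_aut VG EG \<gamma> \<and>
         raag_map VG VG EG \<gamma> \<in> iso (RAAG VG EG) (RAAG VG EG) \<and>
         liftable VL EL VG EG p (raag_map VG VG EG \<gamma>)"
proof -
  define C where "C = phi_class VL EL VG p v"
  interpret graph_covering VL EL VG EG p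
    using assms(1-3) by unfold_locales (auto simp: regular_covering_def)
  interpret covering_class VL EL VG EG p C
  proof
    show "C \<subseteq> VG"
      by (auto simp: C_def phi_class_def)
    show "phi_le VL EL p x y" if "x \<in> C" and "y \<in> C" for x y
      using that phi_le_trans by (auto simp: C_def phi_class_def phi_equiv_def)
  qed
  have \<gamma>: "\<gamma> = extend_by_id C \<gamma>v"
    by (simp add: fun_eq_iff \<gamma>_def C_def extend_by_id_def)
  have bij: "bij_betw \<gamma>v C C"
    using assms(5) by (simp add: C_def)
  have aut: "graph_aut VG EG \<gamma>"
    unfolding \<gamma> using bij by (rule graph_aut_class_perm)
  have "liftable VL EL VG EG p (raag_map VG VG EG \<gamma>)"
    using class_isolated_or_not liftable_nonisolated_class[OF _ bij] liftable_isolated_class[OF _ bij]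
    unfolding \<gamma> by blast
  then show ?thesis
    using aut raag_map_iso_of_graph_aut[OF assms(2) aut] by blast
qed

end
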